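(* Let $L_5=\{-3,-2,-1,0,1\}$ with its natural linear order. Define the games $\star=\{-1\mid -3\}$, and for any game $G$: $\mathsf{M}(G)=\{1\mid G\}$, $\mathsf{P}(G)=\{G\mid -2\}$, $\mathsf{P}_\star(G)=\{G\mid \star\}$. For $n\in\mathbb{N}$ let $\mathsf{P}_n(G)=\mathsf{P}(G)$ if $n$ is odd and $\mathsf{P}_n(G)=\mathsf{P}_\star(G)$ if $n$ is even. Define $G_0=0$ (the atomic game $[0]$) and $G_{n+1}=\mathsf{M}(\mathsf{P}_n(G_n))$. Then for every $n\ge 0$, the game $G_n$ is monotone.
   Context: Games over a poset $A$ of atoms are defined inductively: for each $a\in A$, $[a]$ is a game (atomic; often written simply $a$); whenever $L,R$ are non-empty sets of games, $\{L\mid R\}$ is a game (composite), with left options the elements of $L$ and right options the elements of $R$; $\{G_1,\dots,G_n\mid H_1,\dots,H_m\}$ denotes $\{\{G_1,\dots,G_n\}\mid\{H_1,\dots,H_m\}\}$. A position of $G$ is $G$ itself, an option of $G$, an option of an option, etc. Relations $\le$ and $\lhd$ on games are defined by mutual recursion: $G\le H$ iff (1) every left option $G^L$ of $G$ satisfies $G^L\lhd H$, (2) every right option $H^R$ of $H$ satisfies $G\lhd H^R$, and (3) if $G$ or $H$ is atomic then $G\lhd H$. $G\lhd H$ iff (1) some right option $G^R$ of $G$ satisfies $G^R\le H$, or (2) some left option $H^L$ of $H$ satisfies $G\le H^L$, or (3) $G=[a]$, $H=[b]$ are atomic with $a\le b$ in $A$. A game $G$ is locally monotone if every left option satisfies $G\le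 G^L$ and every right option satisfies $G^R\le G$; it is monotone if every position of $G$ is locally monotone. *)

theory Defs
  imports "HOL-Library.FSet"
begin

text \<open>Games over a poset of atoms. Option sets are represented as finite sets
  (all games considered in the statement have finitely many options).\<close>

datatype 'a game = Atom 'a | Comp "'a game fset" "'a game fset"

fun lopts :: "'a game \<Rightarrow> 'a game fset" where
  "lopts (Atom a) = {||}"
| "lopts (Comp L R) = L"

fun ropts :: "'a game \<Rightarrow> 'a game fset" where
  "ropts (Atom a) = {||}"
| "ropts (Comp L R) = R"

fun is_atom :: "'a game \<Rightarrow> bool" where
  "is_atom (Atom a) = True"
| "is_atom (Comp L R) = False"

fun atom_le :: "'a::order game \<Rightarrow> 'a game \<Rightarrow> bool" where
  "atom_le (Atom a) (Atom b) = (a \<le> b)"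
| "atom_le _ _ = False"

function gdepth :: "'a game \<Rightarrow> nat" where
  "gdepth (Atom a) = 0"
| "gdepth (Comp L R) = Suc (Max (insert 0 (gdepth ` (fset L \<union> fset R))))"
  by pat_completeness auto
termination
proof (relation "measure size", goal_cases)
  case 1 then show ?case by simp
next
  case (2 L R x)
  have "Suc (size x) \<le> (\<Sum>y\<in>fset L \<union> fset R. Suc (size y))"
    using 2 by (intro member_le_sum) auto
  also have "\<dots> \<le> (\<Sum>y\<in>fset L. Suc (size y)) + (\<Sum>y\<in>fset R. Suc (size y))"
    by (simp add: sum_Un_nat)
  finally show ?case by simp
qed

lemma gdepth_lopt: "x |\<in>| lopts G \<Longrightarrow> gdepth x < gdepth G"
  by (cases G) (auto simp: less_Suc_eq_le intro!: Max_ge)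

lemma gdepth_ropt: "x |\<in>| ropts G \<Longrightarrow> gdepth x < gdepth G"
  by (cases G) (auto simp: less_Suc_eq_le intro!: Max_ge)

function game_le :: "'a::order game \<Rightarrow> 'a game \<Rightarrow> bool"
  and game_lf :: "'a::order game \<Rightarrow> 'a game \<Rightarrow> bool" where
  "game_le G H \<longleftrightarrow>
     (\<forall>GL \<in> fset (lopts G). game_lf GL H) \<and>
     (\<forall>HR \<in> fset (ropts H). game_lf G HR) \<and>
     ((is_atom G \<or> is_atom H) \<longrightarrow> game_lf G H)"
| "game_lf G H \<longleftrightarrow>
     (\<exists>GR \<in> fset (ropts G). game_le GR H) \<or>
     (\<exists>HL \<in> fset (lopts H). game_le G HL) \<or>
     atom_le G H"
  by pat_completeness auto
termination
  by (relation "measures [\<lambda>x. case x of Inl (G, H) \<Rightarrow> gdepth G + gdepth H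
                                     | Inr (G, H) \<Rightarrow> gdepth G + gdepth H,
                          \<lambda>x. case x of Inl _ \<Rightarrow> 1 | Inr _ \<Rightarrow> 0]")
     (use gdepth_lopt gdepth_ropt in \<open>fastforce+\<close>)

inductive_set positions :: "'a game \<Rightarrow> 'a game set" for G where
  self: "G \<in> positions G"
| lopt: "P \<in> positions G \<Longrightarrow> Q |\<in>| lopts P \<Longrightarrow> Q \<in> positions G"
| ropt: "P \<in> positions G \<Longrightarrow> Q |\<in>| ropts P \<Longrightarrow> Q \<in> positions G"

definition locally_monotone :: "'a::order game \<Rightarrow> bool" where
  "locally_monotone G \<longleftrightarrow>
     (\<forall>GL. GL |\<in>| lopts G \<longrightarrow> game_le G GL) \<and>
     (\<forall>GR. GR |\<in>| ropts G \<longrightarrow> game_le GR G)"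

definition monotone_game :: "'a::order game \<Rightarrow> bool" where
  "monotone_game G \<longleftrightarrow> (\<forall>P \<in> positions G. locally_monotone P)"

definition L5 :: "int set" where "L5 = {-3, -2, -1, 0, 1}"

definition star :: "int game" where
  "star = Comp {|Atom (-1)|} {|Atom (-3)|}"

definition gM :: "int game \<Rightarrow> int game" where
  "gM G = Comp {|Atom 1|} {|G|}"

definition gP :: "int game \<Rightarrow> int game" where
  "gP G = Comp {|G|} {|Atom (-2)|}"

definition gPstar :: "int game \<Rightarrow> int game" where
  "gPstar G = Comp {|G|} {|star|}"

definition gPn :: "nat \<Rightarrow> int game \<Rightarrow> int game" where
  "gPn n G = (if odd n then gP G else gPstar G)"

primrec Gseq :: "nat \<Rightarrow> int game" where
  "Gseq 0 = Atom 0"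
| "Gseq (Suc n) = gM (gPn n (Gseq n))"

end

theory Submission
  imports Defs
begin

text \<open>Write \<open>H\<^sub>n = P\<^sub>n(G\<^sub>n)\<close>, so \<open>G\<^sub>n\<^sub>+\<^sub>1 = {1 | H\<^sub>n}\<close>. By induction,
  \<open>G\<^sub>n \<le> 1\<close> and \<open>a \<le> G\<^sub>n\<close> for every atom \<open>a \<le> 0\<close>; hence \<open>-2 \<le> H\<^sub>n\<close> and \<open>\<star> \<le> H\<^sub>n\<close>.
  These bounds give \<open>H\<^sub>n \<le> G\<^sub>n\<close> (the right option of \<open>H\<^sub>n\<^sub>+\<^sub>1\<close>, either \<open>-2\<close> or \<open>\<star>\<close>,
  lies below \<open>H\<^sub>n\<close>), and then both \<open>H\<^sub>n\<close> and \<open>G\<^sub>n\<^sub>+\<^sub>1\<close> are locally monotone. A composite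
  game is monotone iff it is locally monotone and its options are monotone, so induction on
  \<open>n\<close> concludes.\<close>

declare game_le.simps [simp del] game_lf.simps [simp del]

lemma game_le_Atom_Atom [simp]: "game_le (Atom a) (Atom b) \<longleftrightarrow> a \<le> b"
  by (subst game_le.simps) (simp add: game_lf.simps [of "Atom a" "Atom b"])

lemma game_le_Comp_Atom [simp]:
  "game_le (Comp L R) (Atom b) \<longleftrightarrow>
     (\<forall>x\<in>fset L. game_lf x (Atom b)) \<and> (\<exists>x\<in>fset R. game_le x (Atom b))"
  by (subst game_le.simps) (auto simp: game_lf.simps [of "Comp L R" "Atom b"])

lemma game_le_Atom_Comp [simp]:
  "game_le (Atom a) (Comp L R) \<longleftrightarrow>
     (\<forall>x\<in>fset R. game_lf (Atom a) x) \<and> (\<exists>x\<in>fset L. game_le (Atom a) x)"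
  by (subst game_le.simps) (auto simp: game_lf.simps [of "Atom a" "Comp L R"])

lemma game_le_Comp_Comp [simp]:
  "game_le (Comp L R) (Comp L' R') \<longleftrightarrow>
     (\<forall>x\<in>fset L. game_lf x (Comp L' R')) \<and> (\<forall>y\<in>fset R'. game_lf (Comp L R) y)"
  by (subst game_le.simps) auto

lemma game_lf_Atom_Atom [simp]: "game_lf (Atom a) (Atom b) \<longleftrightarrow> a \<le> b"
  by (subst game_lf.simps) simp

lemma game_lf_Comp_Atom [simp]:
  "game_lf (Comp L R) (Atom b) \<longleftrightarrow> (\<exists>x\<in>fset R. game_le x (Atom b))"
  by (subst game_lf.simps) simp

lemma game_lf_Atom_Comp [simp]:
  "game_lf (Atom a) (Comp L R) \<longleftrightarrow> (\<exists>x\<in>fset L. game_le (Atom a) x)"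
  by (subst game_lf.simps) simp

lemma game_lf_Comp_Comp [simp]:
  "game_lf (Comp L R) (Comp L' R') \<longleftrightarrow>
     (\<exists>x\<in>fset R. game_le x (Comp L' R')) \<or> (\<exists>y\<in>fset L'. game_le (Comp L R) y)"
  by (subst game_lf.simps) simp

lemma game_lf_lopt: "x |\<in>| lopts H \<Longrightarrow> game_le G x \<Longrightarrow> game_lf G H"
  by (subst game_lf.simps) auto

lemma game_lf_ropt: "x |\<in>| ropts G \<Longrightarrow> game_le x H \<Longrightarrow> game_lf G H"
  by (subst game_lf.simps) auto

lemma game_lf_if_game_le_Atom: "game_le G (Atom b) \<Longrightarrow> game_lf G (Atom b)"
  by (subst (asm) game_le.simps) simp

lemma positions_trans: "Q \<in> positions P \<Longrightarrow> P \<in> positions G \<Longrightarrow> Q \<in> positions G"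
  by (induction rule: positions.induct) (auto intro: positions.intros)

lemma positions_Atom: "positions (Atom a) = {Atom a}"
proof -
  have "P = Atom a" if "P \<in> positions (Atom a)" for P
    using that by (induction rule: positions.induct) auto
  then show ?thesis by (auto intro: positions.self)
qed

lemma positions_Comp:
  "positions (Comp L R) = insert (Comp L R) (\<Union>x \<in> fset L \<union> fset R. positions x)"
proof (intro equalityI subsetI)
  fix P assume "P \<in> positions (Comp L R)"
  then show "P \<in> insert (Comp L R) (\<Union>x \<in> fset L \<union> fset R. positions x)"
  proof (induction rule: positions.induct)
    case (lopt P Q)
    then show ?case using positions.self [of Q] positions.lopt [of P _ Q] by auto
  next
    case (ropt P Q)
    then show ?case using positions.self [of Q] positions.ropt [of P _ Q] by auto
  qed simp
next
  fix P assume "P \<in> insert (Comp L R) (\<Union>x \<in> fset L \<union> fset R. positions x)"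
  moreover have "x \<in> positions (Comp L R)" if "x \<in> fset L \<union> fset R" for x
    using that positions.lopt [OF positions.self, of x "Comp L R"]
      positions.ropt [OF positions.self, of x "Comp L R"] by auto
  ultimately show "P \<in> positions (Comp L R)"
    using positions.self positions_trans by blast
qed

lemma monotone_game_Atom: "monotone_game (Atom a)"
  by (simp add: monotone_game_def positions_Atom locally_monotone_def)

lemma monotone_game_Comp:
  "monotone_game (Comp L R) \<longleftrightarrow>
     locally_monotone (Comp L R) \<and> (\<forall>x \<in> fset L \<union> fset R. monotone_game x)"
  by (auto simp: monotone_game_def positions_Comp)

lemma monotone_game_star: "monotone_game star"
  by (simp add: star_def monotone_game_Comp monotone_game_Atom locally_monotone_def)

lemma gPn_eq: "gPn n G = Comp {|G|} {|if odd n then Atom (-2) else star|}"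
  by (simp add: gPn_def gP_def gPstar_def)

lemma lopts_gPn: "lopts (gPn n G) = {|G|}"
  and ropts_gPn: "ropts (gPn n G) = {|if odd n then Atom (-2) else star|}"
  by (simp_all add: gPn_eq)

lemma gPn_le_one: "game_le G (Atom 1) \<Longrightarrow> game_le (gPn n G) (Atom 1)"
  by (simp add: gPn_eq star_def game_lf_if_game_le_Atom)

lemma atom_le_gPn: "a \<le> -2 \<Longrightarrow> game_le (Atom a) G \<Longrightarrow> game_le (Atom a) (gPn n G)"
  by (simp add: gPn_eq star_def)

lemma star_le_gPn: "game_le (Atom (-1)) G \<Longrightarrow> game_le star (gPn n G)"
  by (simp add: gPn_eq star_def)

lemma gPn_gM_le_gM:
  assumes "game_le (gM H) (Atom 1)" and "game_le (Atom (-2)) H" and "game_le star H"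
  shows "game_le (gPn n (gM H)) (gM H)"
proof -
  have "game_lf (gPn n (gM H)) H"
    by (rule game_lf_ropt [of "if odd n then Atom (-2) else star"])
      (use assms in \<open>simp_all add: ropts_gPn\<close>)
  with assms(1) show ?thesis
    by (simp add: gPn_eq gM_def)
qed

lemma gPn_le_gM_gPn:
  "game_le G (Atom 1) \<Longrightarrow> game_le (gPn n G) G \<Longrightarrow> game_le (gPn n G) (gM (gPn n G))"
  by (simp add: gPn_eq gM_def game_lf_lopt)

lemma locally_monotone_gM_gPn:
  "game_le G (Atom 1) \<Longrightarrow> game_le (gPn n G) G \<Longrightarrow> locally_monotone (gM (gPn n G))"
  using gPn_le_one gPn_le_gM_gPn by (simp add: locally_monotone_def gM_def)

lemma monotone_game_gPn:
  "monotone_game G \<Longrightarrow> locally_monotone (gPn n G) \<Longrightarrow> monotone_game (gPn n G)"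
  by (simp add: gPn_eq monotone_game_Comp monotone_game_Atom monotone_game_star)

lemma monotone_game_gM:
  "monotone_game G \<Longrightarrow> locally_monotone (gM G) \<Longrightarrow> monotone_game (gM G)"
  by (simp add: gM_def monotone_game_Comp monotone_game_Atom)

lemma atom_le_Gseq: "a \<le> 0 \<Longrightarrow> game_le (Atom a) (Gseq n)"
  by (induction n) (simp_all add: gM_def gPn_eq)

lemma Gseq_le_one: "game_le (Gseq n) (Atom 1)"
  by (induction n) (simp_all add: gM_def gPn_le_one)

lemma gPn_Gseq_le_Gseq: "game_le (gPn n (Gseq n)) (Gseq n)"
proof (cases n)
  case 0
  then show ?thesis by (simp add: gPn_eq star_def)
next
  case (Suc k)
  then have Gseq_n: "Gseq n = gM (gPn k (Gseq k))" by simp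
  show ?thesis unfolding Gseq_n
  proof (rule gPn_gM_le_gM)
    show "game_le (gM (gPn k (Gseq k))) (Atom 1)"
      using Gseq_le_one [of n] by (simp add: Gseq_n)
    show "game_le (Atom (-2)) (gPn k (Gseq k))"
      by (rule atom_le_gPn) (simp_all add: atom_le_Gseq)
    show "game_le star (gPn k (Gseq k))"
      by (rule star_le_gPn) (simp add: atom_le_Gseq)
  qed
qed

lemma locally_monotone_gPn_Gseq: "locally_monotone (gPn n (Gseq n))"
proof -
  have "game_le (Atom (-2)) (gPn n (Gseq n))"
    by (rule atom_le_gPn) (simp_all add: atom_le_Gseq)
  moreover have "game_le star (gPn n (Gseq n))"
    by (rule star_le_gPn) (simp add: atom_le_Gseq)
  ultimately show ?thesis
    using gPn_Gseq_le_Gseq by (simp add: locally_monotone_def lopts_gPn ropts_gPn)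
qed

theorem lemma3p1:
  shows "\<forall>n::nat. monotone_game (Gseq n)"
proof
  fix n :: nat
  show "monotone_game (Gseq n)"
  proof (induction n)
    case 0
    then show ?case by (simp add: monotone_game_Atom)
  next
    case (Suc n)
    have "monotone_game (gPn n (Gseq n))"
      using Suc.IH locally_monotone_gPn_Gseq by (rule monotone_game_gPn)
    moreover have "locally_monotone (gM (gPn n (Gseq n)))"
      using Gseq_le_one gPn_Gseq_le_Gseq by (rule locally_monotone_gM_gPn)
    ultimately show ?case
      by (simp add: monotone_game_gM)
  qed
qed

end
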